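(* Let $a, b, n$ be positive integers with $b>1$, $n>1$ and $\gcd(r_b(n),a)=1$. Then the Frobenius number of $S_a(b,n)$ is \[\operatorname{F}(S_a(b,n)) = \begin{cases} (n-1)\,(b^n - 1 - a) + a\, r_b(n) & \text{if } a < b^n - 1,\\ b^n - 1 - a + a\, r_b(n) & \text{if } a > b^n - 1.\end{cases}\]
   Context: For $\ell \ge 1$, $r_b(\ell) = \sum_{j=0}^{\ell-1} b^j$, and $r_b(0)=0$. For $i \ge 1$, $a_i := r_b(n) + a\, r_b(i-1)$; $S_a(b,n)$ is the numerical semigroup generated by $\{a_i : i\ge 1\}$. The Frobenius number $\operatorname{F}(S)$ of a numerical semigroup $S$ is the largest integer not in $S$. *)

theory Defs
  imports Main
begin

definition rb :: "nat \<Rightarrow> nat \<Rightarrow> nat" where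
  "rb b l = (\<Sum>j<l. b ^ j)"

definition gen_a :: "nat \<Rightarrow> nat \<Rightarrow> nat \<Rightarrow> nat \<Rightarrow> nat" where
  "gen_a a b n i = rb b n + a * rb b (i - 1)"

inductive_set monoid_gen :: "nat set \<Rightarrow> nat set" for A :: "nat set" where
  zero: "0 \<in> monoid_gen A"
| add: "x \<in> monoid_gen A \<Longrightarrow> y \<in> A \<Longrightarrow> x + y \<in> monoid_gen A"

definition S_a :: "nat \<Rightarrow> nat \<Rightarrow> nat \<Rightarrow> nat set" where
  "S_a a b n = monoid_gen {gen_a a b n i | i. i \<ge> 1}"

definition frobenius :: "nat set \<Rightarrow> int" where
  "frobenius S = (GREATEST z::int. z \<notin> int ` S)"

end

theory Submission
  imports Defs
begin

text \<open>A sum of k generators a_i_1 + ... + a_i_k equals k r_b(n) + a N with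
  N = r_b(i_1 - 1) + ... + r_b(i_k - 1). Since (b - 1) r_b(e) + 1 = b^e, the pair (k, N) arises this way
  iff (b - 1) N + k is a sum of exactly k powers of b, i.e. iff its base-b digit sum is at most k.
  Because r_b(n) and a are coprime, the representations x = k r_b(n) + a N of a fixed x form a single
  chain (k - a j, N + j r_b(n)). The claimed Frobenius number is excluded from the semigroup by bounding
  the digit sums along its whole chain from below, and every larger number is put into it through its
  representation with N < r_b(n).\<close>

section \<open>Digit sums\<close>

text \<open>The guard \<open>b < 2\<close> only serves termination; all lemmas assume \<open>b \<ge> 2\<close>.\<close>

function digit_sum :: "nat \<Rightarrow> nat \<Rightarrow> nat" where
  "digit_sum b y = (if b < 2 \<or> y = 0 then 0 else y mod b + digit_sum b (y div b))"
  by auto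
termination by (relation "measure snd") auto

declare digit_sum.simps [simp del]

lemma digit_sum_0 [simp]: "digit_sum b 0 = 0"
  by (simp add: digit_sum.simps)

lemma digit_sum_mult_add:
  assumes "b \<ge> 2" "d < b"
  shows "digit_sum b (b * q + d) = d + digit_sum b q"
  using assms by (subst digit_sum.simps) auto

lemma digit_sum_eq:
  assumes "b \<ge> 2"
  shows "digit_sum b y = y mod b + digit_sum b (y div b)"
  using digit_sum_mult_add[OF assms, of "y mod b" "y div b"] assms by simp

lemma digit_sum_le:
  assumes "b \<ge> 2"
  shows "digit_sum b y \<le> y"
proof (induction y rule: less_induct)
  case (less y)
  show ?case
  proof (cases "y = 0")
    case False
    then have "digit_sum b (y div b) \<le> y div b"
      using less assms by simp
    moreover have "y div b \<le> b * (y div b)"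
      using assms by simp
    ultimately show ?thesis
      using digit_sum_eq[OF assms, of y] mult_div_mod_eq[of b y] by linarith
  qed simp
qed

lemma digit_sum_mod:
  assumes "b \<ge> 2"
  shows "digit_sum b y mod (b - 1) = y mod (b - 1)"
proof (induction y rule: less_induct)
  case (less y)
  show ?case
  proof (cases "y = 0")
    case False
    have "y = (b - 1) * (y div b) + (y div b + y mod b)"
      using assms mult_div_mod_eq[of b y] by (simp add: diff_mult_distrib)
    then have "y mod (b - 1) = (y div b + y mod b) mod (b - 1)"
      by (metis mod_mult_self4)
    also have "\<dots> = (digit_sum b (y div b) + y mod b) mod (b - 1)"
      using less[of "y div b"] False assms by (intro mod_add_cong) simp_all
    finally show ?thesis
      using digit_sum_eq[OF assms, of y] by (simp add: add.commute)
  qed simp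
qed

lemma digit_sum_Suc_le:
  assumes "b \<ge> 2"
  shows "digit_sum b (Suc z) \<le> Suc (digit_sum b z)"
proof (induction z rule: less_induct)
  case (less z)
  show ?case
  proof (cases "Suc (z mod b) < b")
    case True
    have split: "Suc z = b * (z div b) + Suc (z mod b)"
      by simp
    have "digit_sum b (Suc z) = Suc (z mod b) + digit_sum b (z div b)"
      unfolding split by (rule digit_sum_mult_add[OF assms True])
    then show ?thesis
      using digit_sum_eq[OF assms, of z] by simp
  next
    case False
    then have last_digit: "z mod b = b - 1"
      using mod_less_divisor[of b z] assms by linarith
    then have "z > 0"
      using assms by (cases "z = 0") auto
    have carry: "Suc z = b * Suc (z div b) + 0"
      using last_digit mult_div_mod_eq[of b z] assms by simp
    have "digit_sum b (Suc z) = digit_sum b (Suc (z div b))"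
      unfolding carry using digit_sum_mult_add[OF assms, of 0 "Suc (z div b)"] assms by simp
    also have "\<dots> \<le> Suc (digit_sum b (z div b))"
      using less \<open>z > 0\<close> assms by simp
    finally show ?thesis
      using digit_sum_eq[OF assms, of z] by simp
  qed
qed

lemma digit_sum_add_le:
  assumes "b \<ge> 2"
  shows "digit_sum b (y + z) \<le> digit_sum b y + digit_sum b z"
proof (induction y arbitrary: z rule: less_induct)
  case (less y)
  show ?case
  proof (cases "y = 0")
    case False
    define q1 d1 q2 d2 where "q1 = y div b" "d1 = y mod b" "q2 = z div b" "d2 = z mod b"
    have "q1 < y" and digits: "d1 < b" "d2 < b"
      using False assms by (auto simp: q1_d1_q2_d2_def)
    have yz: "y = b * q1 + d1" "z = b * q2 + d2"
      by (simp_all add: q1_d1_q2_d2_def)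
    have ds_yz: "digit_sum b y = d1 + digit_sum b q1" "digit_sum b z = d2 + digit_sum b q2"
      using yz digit_sum_mult_add[OF assms] digits by auto
    show ?thesis
    proof (cases "d1 + d2 < b")
      case True
      have "y + z = b * (q1 + q2) + (d1 + d2)"
        using yz by (simp add: algebra_simps)
      then show ?thesis
        using digit_sum_mult_add[OF assms True] less[OF \<open>q1 < y\<close>, of q2] ds_yz by simp
    next
      case False
      have split: "y + z = b * (q1 + Suc q2) + (d1 + d2 - b)"
        using yz False by (simp add: algebra_simps)
      have "digit_sum b (y + z) = d1 + d2 - b + digit_sum b (q1 + Suc q2)"
        unfolding split by (rule digit_sum_mult_add[OF assms]) (use digits in linarith)
      moreover have "digit_sum b (q1 + Suc q2) \<le> digit_sum b q1 + digit_sum b (Suc q2)"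
        using less[OF \<open>q1 < y\<close>] .
      moreover have "digit_sum b (Suc q2) \<le> Suc (digit_sum b q2)"
        using digit_sum_Suc_le[OF assms] .
      ultimately show ?thesis
        using ds_yz False digits by linarith
    qed
  qed simp
qed

lemma digit_sum_power:
  assumes "b \<ge> 2"
  shows "digit_sum b (b ^ e) = 1"
proof (induction e)
  case 0
  then show ?case
    using digit_sum_mult_add[OF assms, of 1 0] assms by simp
next
  case (Suc e)
  then show ?case
    using digit_sum_mult_add[OF assms, of 0 "b ^ e"] assms by simp
qed

lemma digit_sum_mult_power_add:
  assumes "b \<ge> 2" "w < b ^ n"
  shows "digit_sum b (q * b ^ n + w) = digit_sum b q + digit_sum b w"
  using assms(2)
proof (induction n arbitrary: w)
  case (Suc n)
  have "w div b < b ^ n"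
    using Suc.prems by (simp add: less_mult_imp_div_less mult.commute)
  moreover have "q * b ^ Suc n + w = b * (q * b ^ n + w div b) + w mod b"
    by (simp add: algebra_simps)
  ultimately show ?case
    using digit_sum_mult_add[OF assms(1)] digit_sum_eq[OF assms(1), of w] Suc.IH assms(1)
    by simp
qed simp

lemma digit_sum_complement:
  assumes "b \<ge> 2" "z < b ^ n"
  shows "digit_sum b (b ^ n - 1 - z) + digit_sum b z = n * (b - 1)"
  using assms(2)
proof (induction n arbitrary: z)
  case (Suc n)
  have high: "z div b < b ^ n"
    using Suc.prems by (simp add: less_mult_imp_div_less mult.commute)
  have low: "z mod b < b"
    using assms(1) by simp
  have "b ^ Suc n - 1 - z = b * (b ^ n - 1 - z div b) + (b - 1 - z mod b)"
  proof -
    have "b * (z div b) + b \<le> b * b ^ n"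
      using high mult_le_mono2[of "Suc (z div b)" "b ^ n" b] by simp
    then show ?thesis
      using mult_div_mod_eq[of b z] low by (simp add: algebra_simps diff_mult_distrib2)
  qed
  then have "digit_sum b (b ^ Suc n - 1 - z) = (b - 1 - z mod b) + digit_sum b (b ^ n - 1 - z div b)"
    using digit_sum_mult_add[OF assms(1)] assms(1) by simp
  then show ?case
    using Suc.IH[OF high] digit_sum_eq[OF assms(1), of z] low by simp
qed simp

lemma digit_sum_le_of_less_power:
  assumes "b \<ge> 2" "y < b ^ n"
  shows "digit_sum b y \<le> n * (b - 1)"
  using digit_sum_complement[OF assms] by linarith

lemma digit_sum_le_of_ge_power:
  assumes "b \<ge> 2" "b ^ e \<le> y" "y < b ^ e + k"
  shows "digit_sum b y \<le> k"
proof -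
  have "digit_sum b y \<le> digit_sum b (b ^ e) + digit_sum b (y - b ^ e)"
    using digit_sum_add_le[OF assms(1), of "b ^ e" "y - b ^ e"] assms(2) by simp
  also have "\<dots> \<le> 1 + (y - b ^ e)"
    using digit_sum_power[OF assms(1)] digit_sum_le[OF assms(1)] by simp
  finally show ?thesis
    using assms(2,3) by linarith
qed

lemma digit_sum_add_lt:
  assumes "b \<ge> 2" "2 * j \<le> u"
  shows "digit_sum b u + j < u + (b - 1)"
proof -
  define q d where "q = u div b" "d = u mod b"
  have u: "u = b * q + d" and "d < b"
    using assms(1) by (simp_all add: q_d_def)
  have digit_sum_u: "digit_sum b u \<le> d + q"
    using digit_sum_eq[OF assms(1), of u] digit_sum_le[OF assms(1), of q] by (simp add: q_d_def)
  obtain c where b: "b = c + 2"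
    using assms(1) by (metis add.commute le_add_diff_inverse)
  have "2 * j < 2 * ((c + 1) * (q + 1))"
    using assms(2) u \<open>d < b\<close> b by (simp add: algebra_simps)
  moreover have "u + (b - 1) = d + q + (c + 1) * (q + 1)"
    using u b by (simp add: algebra_simps)
  ultimately show ?thesis
    using digit_sum_u by linarith
qed

section \<open>Repunits\<close>

lemma rb_Suc: "rb b (Suc l) = rb b l + b ^ l"
  by (simp add: rb_def)

lemma power_eq_rb:
  assumes "b \<ge> 1"
  shows "b ^ l = (b - 1) * rb b l + 1"
proof (induction l)
  case 0
  then show ?case by (simp add: rb_def)
next
  case (Suc l)
  obtain c where "b = Suc c"
    using assms by (cases b) auto
  then show ?case
    using Suc by (simp add: rb_Suc algebra_simps)
qed

lemma rb_lower_bound: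
  assumes "b \<ge> 2"
  shows "2 * l \<le> rb b l + 1"
proof (induction l)
  case (Suc l)
  have "2 \<le> b ^ l" if "l > 0"
    using power_increasing[of 1 l b] assms that by simp
  then show ?case
    using Suc assms by (cases "l = 0") (auto simp: rb_Suc rb_def)
qed simp

section \<open>Sums of powers and membership in \<open>S_a a b n\<close>\<close>

inductive sum_of_powers :: "nat \<Rightarrow> nat \<Rightarrow> nat \<Rightarrow> bool" for b where
  sum_of_powers_0: "sum_of_powers b 0 0"
| sum_of_powers_Suc: "sum_of_powers b m y \<Longrightarrow> sum_of_powers b (Suc m) (y + b ^ e)"

lemma sum_of_powers_digit_sum_le:
  assumes "b \<ge> 2" "sum_of_powers b m y"
  shows "digit_sum b y \<le> m"
  using assms(2)
proof induction
  case (sum_of_powers_Suc m y e)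
  then show ?case
    using digit_sum_add_le[OF assms(1), of y "b ^ e"] digit_sum_power[OF assms(1), of e] by simp
qed simp

lemma sum_of_powers_le:
  assumes "b \<ge> 1" "sum_of_powers b m y"
  shows "m \<le> y"
  using assms(2)
proof induction
  case (sum_of_powers_Suc m y e)
  have "0 < b ^ e"
    using assms(1) by simp
  then show ?case
    using sum_of_powers_Suc.IH by linarith
qed simp

lemma sum_of_powers_mult: "sum_of_powers b m y \<Longrightarrow> sum_of_powers b m (b * y)"
proof (induction rule: sum_of_powers.induct)
  case (sum_of_powers_Suc m y e)
  then show ?case
    using sum_of_powers.sum_of_powers_Suc[of b m "b * y" "Suc e"] by (simp add: algebra_simps)
qed (simp add: sum_of_powers.sum_of_powers_0)

lemma sum_of_powers_add_copies:
  "sum_of_powers b m y \<Longrightarrow> sum_of_powers b (m + c) (y + c * b ^ e)"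
proof (induction c)
  case (Suc c)
  then show ?case
    using sum_of_powers_Suc[of b "m + c" "y + c * b ^ e" e] by (simp add: algebra_simps)
qed simp

lemma sum_of_powers_digit_sum:
  assumes "b \<ge> 2"
  shows "sum_of_powers b (digit_sum b y) y"
proof (induction y rule: less_induct)
  case (less y)
  show ?case
  proof (cases "y = 0")
    case True
    then show ?thesis
      by (simp add: sum_of_powers_0)
  next
    case False
    then have "sum_of_powers b (digit_sum b (y div b)) (b * (y div b))"
      using less assms sum_of_powers_mult by simp
    then have "sum_of_powers b (digit_sum b (y div b) + y mod b) (b * (y div b) + y mod b * b ^ 0)"
      by (rule sum_of_powers_add_copies)
    then show ?thesis
      using digit_sum_eq[OF assms, of y] by (simp add: add.commute)
  qed
qed

text \<open>Splitting one summand \<open>b ^ Suc e\<close> into \<open>b\<close> copies of \<open>b ^ e\<close> adds \<open>b - 1\<close> summands,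
  and some summand exceeds \<open>1\<close> as long as \<open>m < y\<close>.\<close>
lemma sum_of_powers_refine:
  assumes "b \<ge> 1" "sum_of_powers b m y" "m < y"
  shows "sum_of_powers b (m + (b - 1)) y"
  using assms(2,3)
proof induction
  case (sum_of_powers_Suc m y e)
  show ?case
  proof (cases e)
    case 0
    then show ?thesis
      using sum_of_powers_Suc sum_of_powers.sum_of_powers_Suc[of b "m + (b - 1)" y 0] by simp
  next
    case (Suc f)
    then show ?thesis
      using sum_of_powers_add_copies[OF sum_of_powers_Suc.hyps, of b f] assms(1) by simp
  qed
qed simp

lemma sum_of_powers_if_digit_sum_le:
  assumes "b \<ge> 2" "digit_sum b y \<le> m" "m \<le> y" "m mod (b - 1) = y mod (b - 1)"
  shows "sum_of_powers b m y"
proof -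
  have "(b - 1) dvd m - digit_sum b y"
    using mod_eq_dvd_iff_nat[OF assms(2), of "b - 1"] assms(4) digit_sum_mod[OF assms(1), of y]
    by simp
  then obtain t where m: "m = digit_sum b y + t * (b - 1)"
    using assms(2) by (metis dvd_div_mult_self le_add_diff_inverse)
  have "sum_of_powers b (digit_sum b y + t * (b - 1)) y" if "digit_sum b y + t * (b - 1) \<le> y" for t
    using that
  proof (induction t)
    case 0
    then show ?case
      using sum_of_powers_digit_sum[OF assms(1)] by simp
  next
    case (Suc t)
    then have "sum_of_powers b (digit_sum b y + t * (b - 1) + (b - 1)) y"
      using sum_of_powers_refine[of b] assms(1) by simp
    then show ?case
      by (metis add.assoc add.commute mult_Suc)
  qed
  then show ?thesis
    using m assms(3) by simp
qed

lemma sum_of_powers_imp_mem_S_a: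
  assumes "b \<ge> 2" "sum_of_powers b k ((b - 1) * N + k)"
  shows "k * rb b n + a * N \<in> S_a a b n"
proof -
  have "k * rb b n + a * N \<in> S_a a b n" if "sum_of_powers b k y" "y = (b - 1) * N + k" for y N
    using that
  proof (induction arbitrary: N rule: sum_of_powers.induct)
    case sum_of_powers_0
    then show ?case
      using assms(1) by (simp add: S_a_def monoid_gen.zero)
  next
    case (sum_of_powers_Suc k y e N)
    have "k \<le> y"
      using sum_of_powers_le[OF _ sum_of_powers_Suc.hyps] assms(1) by simp
    then have "(b - 1) * N = (b - 1) * rb b e + (y - k)"
      using sum_of_powers_Suc.prems power_eq_rb[of b e] assms(1) by simp
    then have "(b - 1) * rb b e \<le> (b - 1) * N"
      by simp
    then have "rb b e \<le> N"
      using assms(1) by simp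
    define N' where "N' = N - rb b e"
    have N: "N = rb b e + N'"
      using \<open>rb b e \<le> N\<close> by (simp add: N'_def)
    have "y = (b - 1) * N' + k"
      using \<open>(b - 1) * N = _\<close> \<open>k \<le> y\<close> unfolding N by (simp add: distrib_left)
    then have "k * rb b n + a * N' \<in> S_a a b n"
      using sum_of_powers_Suc.IH by simp
    then have "k * rb b n + a * N' + gen_a a b n (Suc e) \<in> S_a a b n"
      unfolding S_a_def by (rule monoid_gen.add) auto
    then show ?case
      unfolding N gen_a_def by (simp add: algebra_simps)
  qed
  then show ?thesis
    using assms(2) by blast
qed

lemma mem_S_a_imp_sum_of_powers:
  assumes "b \<ge> 1" "x \<in> S_a a b n"
  shows "\<exists>k N. x = k * rb b n + a * N \<and> sum_of_powers b k ((b - 1) * N + k)"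
  using assms(2) unfolding S_a_def
proof induction
  case zero
  show ?case
    using sum_of_powers_0 by fastforce
next
  case (add x y)
  obtain k N where x: "x = k * rb b n + a * N" and sop: "sum_of_powers b k ((b - 1) * N + k)"
    using add.IH by blast
  obtain i where "y = gen_a a b n i"
    using add.hyps by blast
  then have "x + y = Suc k * rb b n + a * (N + rb b (i - 1))"
    unfolding x gen_a_def by (simp add: algebra_simps)
  moreover have "(b - 1) * (N + rb b (i - 1)) + Suc k = ((b - 1) * N + k) + b ^ (i - 1)"
    using power_eq_rb[OF assms(1), of "i - 1"] by (simp add: algebra_simps)
  ultimately show ?case
    using sum_of_powers_Suc[OF sop, of "i - 1"] by metis
qed

lemma mem_S_a_iff:
  assumes "b \<ge> 2"
  shows "x \<in> S_a a b n \<longleftrightarrow> (\<exists>k N. x = k * rb b n + a * N \<and> digit_sum b ((b - 1) * N + k) \<le> k)"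
proof
  assume "x \<in> S_a a b n"
  then show "\<exists>k N. x = k * rb b n + a * N \<and> digit_sum b ((b - 1) * N + k) \<le> k"
    using mem_S_a_imp_sum_of_powers[of b] sum_of_powers_digit_sum_le[OF assms] assms by fastforce
next
  assume "\<exists>k N. x = k * rb b n + a * N \<and> digit_sum b ((b - 1) * N + k) \<le> k"
  then obtain k N where "x = k * rb b n + a * N" "digit_sum b ((b - 1) * N + k) \<le> k"
    by blast
  moreover have "sum_of_powers b k ((b - 1) * N + k)"
    by (rule sum_of_powers_if_digit_sum_le[OF assms]) (use calculation(2) in simp_all)
  ultimately show "x \<in> S_a a b n"
    using sum_of_powers_imp_mem_S_a[OF assms] by simp
qed

section \<open>The Frobenius number\<close>

lemma frobenius_eqI:
  assumes "F \<notin> S" "\<And>x. F < x \<Longrightarrow> x \<in> S"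
  shows "frobenius S = int F"
  unfolding frobenius_def
proof (rule Greatest_equality)
  show "int F \<notin> int ` S"
    using assms(1) by auto
next
  fix z :: int
  assume z: "z \<notin> int ` S"
  show "z \<le> int F"
  proof (rule ccontr)
    assume "\<not> z \<le> int F"
    then have "nat z \<in> S" and "z = int (nat z)"
      using assms(2) by auto
    then show False
      using z by blast
  qed
qed

lemma linear_repr_shift:
  fixes r a N0 K0 k N :: nat
  assumes "coprime r a" "N0 < r" "K0 * r + a * N0 = k * r + a * N"
  shows "\<exists>j. N = N0 + j * r \<and> K0 = k + a * j"
proof -
  have eq: "int a * (int N - int N0) = int r * (int K0 - int k)"
    using arg_cong[OF assms(3), of int] by (simp add: algebra_simps)
  then have "int r dvd int a * (int N - int N0)"
    by simp
  then have "int r dvd int N - int N0"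
    using assms(1) by (simp add: coprime_dvd_mult_right_iff)
  then obtain j where j: "int N - int N0 = int r * j"
    by blast
  have "j \<ge> 0"
  proof (rule ccontr)
    assume "\<not> j \<ge> 0"
    then have "int r * j \<le> - int r"
      using mult_left_mono[of j "-1" "int r"] by simp
    then show False
      using j assms(2) by linarith
  qed
  then obtain i where i: "j = int i"
    using nonneg_eq_int by blast
  have "int N = int (N0 + i * r)"
    using j i by (simp add: algebra_simps)
  then have "N = N0 + i * r"
    by (simp only: of_nat_eq_iff)
  moreover have "int r * (int K0 - int k) = int r * (int a * int i)"
    using eq j i by (simp add: algebra_simps)
  then have "int K0 = int (k + a * i)"
    using assms(2) by simp
  then have "K0 = k + a * i"
    by (simp only: of_nat_eq_iff)
  ultimately show ?thesis
    by blast
qed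

lemma linear_repr_exists:
  fixes r a x :: nat
  assumes "coprime r a" "0 < a" "0 < r" "a * (r - 1) \<le> x"
  shows "\<exists>k N. N < r \<and> x = k * r + a * N"
proof -
  obtain u v where "a * u = r * v + gcd a r"
    using bezout_nat[of a r] assms(2) by auto
  then have uv: "a * u = r * v + 1"
    using assms(1) by (simp add: coprime_iff_gcd_eq_1 gcd.commute)
  define N where "N = (u * x) mod r"
  have "N < r"
    using assms(3) by (simp add: N_def)
  have "(a * N) mod r = (a * (u * x)) mod r"
    unfolding N_def by (simp add: mod_mult_right_eq)
  also have "a * (u * x) = r * (v * x) + x"
    using arg_cong[OF uv, of "\<lambda>t. t * x"] by (simp add: algebra_simps)
  finally have "(a * N) mod r = x mod r"
    by simp
  moreover have "a * N \<le> x"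
    using \<open>N < r\<close> assms(4) mult_le_mono2[of N "r - 1" a] by linarith
  ultimately have "r dvd x - a * N"
    using mod_eq_dvd_iff_nat[of "a * N" x r] by simp
  then obtain k where "x - a * N = r * k"
    by (elim dvdE)
  then have "x = k * r + a * N"
    using \<open>a * N \<le> x\<close> by (simp add: mult.commute)
  then show ?thesis
    using \<open>N < r\<close> by blast
qed

lemma digit_sum_le_of_less_power_cong:
  assumes "b \<ge> 2" "y < b ^ n" "k mod (b - 1) = y mod (b - 1)" "(n - 1) * (b - 1) < k"
  shows "digit_sum b y \<le> k"
proof (rule ccontr)
  assume "\<not> digit_sum b y \<le> k"
  then have "(b - 1) dvd digit_sum b y - k"
    using mod_eq_dvd_iff_nat[of k "digit_sum b y" "b - 1"] assms(3) digit_sum_mod[OF assms(1), of y]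
    by simp
  moreover have "digit_sum b y - k > 0"
    using \<open>\<not> digit_sum b y \<le> k\<close> by simp
  ultimately have "b - 1 \<le> digit_sum b y - k"
    by (simp add: dvd_imp_le)
  moreover have "n * (b - 1) \<le> (n - 1) * (b - 1) + (b - 1)"
    by (cases n) auto
  ultimately show False
    using digit_sum_le_of_less_power[OF assms(1,2)] assms(4) \<open>\<not> digit_sum b y \<le> k\<close>
    by linarith
qed

locale repunit_semigroup =
  fixes a b n :: nat
  assumes a_pos: "0 < a" and b_ge_2: "2 \<le> b" and n_ge_2: "2 \<le> n"
    and coprime_rb: "coprime (rb b n) a"
begin

abbreviation r :: nat where "r \<equiv> rb b n"

lemma power_n_eq: "b ^ n = (b - 1) * r + 1"
  using power_eq_rb[of b n] b_ge_2 by simp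

lemma power_n_eq_int: "int b ^ n = (int b - 1) * int r + 1"
  using arg_cong[OF power_n_eq, of int] b_ge_2 by (simp add: of_nat_diff)

lemma n_le_r: "n \<le> r"
  using rb_lower_bound[OF b_ge_2, of n] n_ge_2 by linarith

lemma not_mem_S_aI:
  assumes "N0 < r"
    and "\<And>j. a * j \<le> K0 \<Longrightarrow> K0 - a * j < digit_sum b ((b - 1) * (N0 + j * r) + (K0 - a * j))"
  shows "K0 * r + a * N0 \<notin> S_a a b n"
proof
  assume "K0 * r + a * N0 \<in> S_a a b n"
  then obtain k N where repr: "K0 * r + a * N0 = k * r + a * N"
    and le: "digit_sum b ((b - 1) * N + k) \<le> k"
    using mem_S_a_iff[OF b_ge_2] by blast
  obtain j where "N = N0 + j * r" "K0 = k + a * j"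
    using linear_repr_shift[OF coprime_rb assms(1) repr] by blast
  then show False
    using assms(2)[of j] le by simp
qed

lemma mem_S_aI:
  assumes "a * (r - 1) \<le> x"
    and "\<And>k N. N < r \<Longrightarrow> x = k * r + a * N \<Longrightarrow> b ^ n \<le> (b - 1) * N + k \<or> (n - 1) * (b - 1) < k"
  shows "x \<in> S_a a b n"
proof -
  have "0 < r"
    using n_le_r n_ge_2 by simp
  then obtain k N where "N < r" and x: "x = k * r + a * N"
    using linear_repr_exists[OF coprime_rb a_pos _ assms(1)] by blast
  have "(b - 1) * N \<le> (b - 1) * r"
    using \<open>N < r\<close> by simp
  then have "(b - 1) * N + k < b ^ n + k"
    using power_n_eq by linarith
  moreover have "k mod (b - 1) = ((b - 1) * N + k) mod (b - 1)"
    by simp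
  ultimately have "digit_sum b ((b - 1) * N + k) \<le> k"
    using assms(2)[OF \<open>N < r\<close> x] digit_sum_le_of_ge_power[OF b_ge_2]
      digit_sum_le_of_less_power_cong[OF b_ge_2] not_le by blast
  then show ?thesis
    using mem_S_a_iff[OF b_ge_2] x by blast
qed

lemma not_mem_S_a_large:
  assumes "(b - 1) * r < a"
  shows "(b - 1) * r + a * (r - 1) \<notin> S_a a b n"
proof (rule not_mem_S_aI)
  show "r - 1 < r"
    using n_le_r n_ge_2 by simp
next
  fix j
  assume "a * j \<le> b - 1"
  have "j = 0"
  proof (rule ccontr)
    assume "j \<noteq> 0"
    then have "a \<le> a * j"
      by simp
    moreover have "b - 1 \<le> (b - 1) * r"
      using n_le_r n_ge_2 by simp
    ultimately show False
      using \<open>a * j \<le> b - 1\<close> assms by linarith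
  qed
  obtain s where "r = Suc s"
    using n_le_r n_ge_2 by (cases r) auto
  then have "(b - 1) * (r - 1 + j * r) + (b - 1 - a * j) = (b - 1) * r"
    using \<open>j = 0\<close> by simp
  then have "(b - 1) * (r - 1 + j * r) + (b - 1 - a * j) = b ^ n - 1 - 0"
    using power_n_eq by simp
  moreover have "b - 1 < n * (b - 1)"
    using n_ge_2 b_ge_2 by simp
  ultimately show "b - 1 - a * j < digit_sum b ((b - 1) * (r - 1 + j * r) + (b - 1 - a * j))"
    using digit_sum_complement[OF b_ge_2, of 0 n] b_ge_2 \<open>j = 0\<close> by simp
qed

lemma mem_S_a_large:
  assumes "(b - 1) * r < a" "(b - 1) * r + a * (r - 1) < x"
  shows "x \<in> S_a a b n"
proof (rule mem_S_aI)
  show "a * (r - 1) \<le> x"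
    using assms(2) by simp
next
  fix k N
  assume "N < r" "x = k * r + a * N"
  define M where "M = r - 1 - N"
  have r: "r = N + M + 1"
    using \<open>N < r\<close> by (simp add: M_def)
  have "(b - 1) * r + a * M < k * r"
    using assms(2) \<open>x = k * r + a * N\<close> unfolding r by (simp add: algebra_simps)
  moreover have "((b - 1) * r) * M \<le> a * M"
    using assms(1) by simp
  ultimately have "((b - 1) + (b - 1) * M) * r < k * r"
    by (simp add: algebra_simps)
  then have "(b - 1) + (b - 1) * M < k"
    by (simp only: mult_less_cancel2)
  then have "b ^ n \<le> (b - 1) * N + k"
    using power_n_eq unfolding r by (simp add: algebra_simps)
  then show "b ^ n \<le> (b - 1) * N + k \<or> (n - 1) * (b - 1) < k" ..
qed

lemma not_mem_S_a_small:
  assumes "a < (b - 1) * r"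
  shows "(n - 1) * (b - 1) * r + a * (r - (n - 1)) \<notin> S_a a b n"
proof (rule not_mem_S_aI)
  show "r - (n - 1) < r"
    using n_le_r n_ge_2 by simp
next
  fix j
  assume aj: "a * j \<le> (n - 1) * (b - 1)"
  define u where "u = a * j + j"
  have "j \<le> a * j"
    using a_pos by simp
  then have "u \<le> 2 * ((n - 1) * (b - 1))"
    using aj unfolding u_def by linarith
  also have "\<dots> = (2 * (n - 1)) * (b - 1)"
    by simp
  also have "\<dots> \<le> (r - 1) * (b - 1)"
    using rb_lower_bound[OF b_ge_2, of n] n_ge_2 by (intro mult_right_mono) auto
  also have "\<dots> \<le> (b - 1) * r"
    by (simp add: mult.commute)
  also have "\<dots> < b ^ n"
    using power_n_eq by simp
  finally have "u < b ^ n" .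
  have y: "(b - 1) * (r - (n - 1) + j * r) + ((n - 1) * (b - 1) - a * j)
      = j * b ^ n + (b ^ n - 1 - u)"
  proof -
    define B m where "B = b - 1" and "m = n - 1"
    define N0 where "N0 = r - m"
    have r: "r = N0 + m"
      using n_le_r by (simp add: N0_def m_def)
    have "a * j \<le> m * B" "b ^ n = B * r + 1"
      using aj power_n_eq by (simp_all add: B_def m_def)
    then have "int (B * (N0 + j * r) + (m * B - a * j)) = int (j * b ^ n + (b ^ n - 1 - u))"
      using \<open>u < b ^ n\<close> unfolding r by (simp add: u_def of_nat_diff algebra_simps)
    then have "B * (N0 + j * r) + (m * B - a * j) = j * b ^ n + (b ^ n - 1 - u)"
      by (simp only: of_nat_eq_iff)
    moreover have "N0 = r - (n - 1)"
      using r by (simp add: m_def)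
    ultimately show ?thesis
      by (simp add: B_def m_def)
  qed
  have "digit_sum b (j * b ^ n + (b ^ n - 1 - u)) = digit_sum b j + digit_sum b (b ^ n - 1 - u)"
    by (rule digit_sum_mult_power_add[OF b_ge_2]) (use \<open>u < b ^ n\<close> in simp)
  moreover have "digit_sum b (b ^ n - 1 - u) + digit_sum b u = n * (b - 1)"
    using digit_sum_complement[OF b_ge_2 \<open>u < b ^ n\<close>] .
  moreover have "digit_sum b u + j < u + (b - 1)"
    using digit_sum_add_lt[OF b_ge_2] \<open>j \<le> a * j\<close> by (simp add: u_def)
  moreover have "n * (b - 1) = (n - 1) * (b - 1) + (b - 1)"
    using n_ge_2 by (cases n) auto
  ultimately show "(n - 1) * (b - 1) - a * j
      < digit_sum b ((b - 1) * (r - (n - 1) + j * r) + ((n - 1) * (b - 1) - a * j))"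
    unfolding y u_def using aj by linarith
qed

lemma mem_S_a_small:
  assumes "a < (b - 1) * r" "(n - 1) * (b - 1) * r + a * (r - (n - 1)) < x"
  shows "x \<in> S_a a b n"
proof (rule mem_S_aI)
  have "r - 1 = (r - (n - 1)) + (n - 2)"
    using n_le_r n_ge_2 by simp
  then have "a * (r - 1) = a * (r - (n - 1)) + a * (n - 2)"
    by (simp add: distrib_left)
  moreover have "a * (n - 2) \<le> (b - 1) * r * (n - 2)"
    using assms(1) by simp
  moreover have "(b - 1) * r * (n - 2) \<le> (n - 1) * (b - 1) * r"
    by simp arith
  ultimately show "a * (r - 1) \<le> x"
    using assms(2) by linarith
next
  fix k N
  assume "N < r" and x: "x = k * r + a * N"
  define N0 where "N0 = r - (n - 1)"
  have r: "r = N0 + (n - 1)"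
    using n_le_r by (simp add: N0_def)
  show "b ^ n \<le> (b - 1) * N + k \<or> (n - 1) * (b - 1) < k"
  proof (rule ccontr)
    assume "\<not> ?thesis"
    then have low: "(b - 1) * N + k \<le> (b - 1) * r" and "k \<le> (n - 1) * (b - 1)"
      using power_n_eq by auto
    have "x \<le> (n - 1) * (b - 1) * r + a * N0"
    proof (cases "N \<le> N0")
      case True
      then show ?thesis
        using \<open>k \<le> (n - 1) * (b - 1)\<close> unfolding x
        by (intro add_mono mult_right_mono mult_left_mono) simp_all
    next
      case False
      define M where "M = N - N0"
      have N: "N = N0 + M" and "0 < M"
        using False by (simp_all add: M_def)
      have "(b - 1) * N0 + (b - 1) * M + k \<le> (b - 1) * N0 + (b - 1) * (n - 1)"
        using low unfolding r N by (simp only: distrib_left)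
      then have "k + (b - 1) * M \<le> (n - 1) * (b - 1)"
        by (simp add: mult.commute)
      then have "k * r + (b - 1) * M * r \<le> (n - 1) * (b - 1) * r"
        using mult_right_mono[of "k + (b - 1) * M" "(n - 1) * (b - 1)" r]
        by (simp add: algebra_simps)
      moreover have "a * M \<le> (b - 1) * r * M"
        using assms(1) by simp
      ultimately show ?thesis
        unfolding x N by (simp add: algebra_simps)
    qed
    then show False
      using assms(2) unfolding N0_def by simp
  qed
qed

lemma frobenius_S_a_small:
  assumes "a < b ^ n - 1"
  shows "frobenius (S_a a b n) = (int n - 1) * (int b ^ n - 1 - int a) + int a * int r"
proof -
  have "a < (b - 1) * r"
    using assms power_n_eq by simp
  then have "frobenius (S_a a b n) = int ((n - 1) * (b - 1) * r + a * (r - (n - 1)))"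
    using not_mem_S_a_small mem_S_a_small by (intro frobenius_eqI)
  also have "\<dots> = (int n - 1) * (int b - 1) * int r + int a * (int r - (int n - 1))"
    using n_le_r n_ge_2 b_ge_2 by (simp add: of_nat_diff)
  also have "\<dots> = (int n - 1) * (int b ^ n - 1 - int a) + int a * int r"
    unfolding power_n_eq_int by (simp add: algebra_simps)
  finally show ?thesis .
qed

lemma frobenius_S_a_large:
  assumes "b ^ n - 1 < a"
  shows "frobenius (S_a a b n) = int b ^ n - 1 - int a + int a * int r"
proof -
  have "(b - 1) * r < a"
    using assms power_n_eq by simp
  then have "frobenius (S_a a b n) = int ((b - 1) * r + a * (r - 1))"
    using not_mem_S_a_large mem_S_a_large by (intro frobenius_eqI)
  also have "\<dots> = (int b - 1) * int r + int a * (int r - 1)"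
    using n_le_r n_ge_2 b_ge_2 by (simp add: of_nat_diff)
  also have "\<dots> = int b ^ n - 1 - int a + int a * int r"
    unfolding power_n_eq_int by (simp add: algebra_simps)
  finally show ?thesis .
qed

end

theorem theorem22:
  fixes a b n :: nat
  assumes "a > 0" and "b > 1" and "n > 1" and "gcd (rb b n) a = 1"
  shows "(a < b ^ n - 1 \<longrightarrow>
           frobenius (S_a a b n) = (int n - 1) * (int b ^ n - 1 - int a) + int a * int (rb b n))
       \<and> (a > b ^ n - 1 \<longrightarrow>
           frobenius (S_a a b n) = int b ^ n - 1 - int a + int a * int (rb b n))"
proof -
  interpret repunit_semigroup a b n
    using assms by unfold_locales (simp_all add: coprime_iff_gcd_eq_1)
  show ?thesis
    using frobenius_S_a_small frobenius_S_a_large by blast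
qed

end
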